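(* Let $X,Y$ be Banach spaces, $C\colon X\to Y$ a bounded linear operator, $(S_t)_{t\ge0}$ a semigroup of bounded linear operators on $X$ (i.e. $S_0=\mathrm{Id}$, $S_{t+s}=S_tS_s$), and $M\ge1$, $\omega\in\mathbb{R}$ with $\|S_t\|\le Me^{\omega t}$ for all $t\ge0$. Assume that for every $x\in X$ the map $t\mapsto\|CS_tx\|_Y$ is measurable. Let $\lambda^*\ge0$, $(P_\lambda)_{\lambda>\lambda^*}$ a family of bounded linear operators on $X$, $r\in[1,\infty]$, $d_0,d_1,d_3,\gamma_1,\gamma_2,\gamma_3,T>0$ with $\gamma_1<\gamma_2$, and $d_2\ge1$, and assume \[ \|P_\lambda x\|_X\le d_0e^{d_1\lambda^{\gamma_1}}\|CP_\lambda x\|_Y\quad\text{for all }x\in X,\ \lambda>\lambda^*, \] and \[ \|(\mathrm{Id}-P_\lambda)S_tx\|_X\le d_2e^{-d_3\lambda^{\gamma_2}t^{\gamma_3}}\|x\|_X\quad\text{for all }x\in X,\ \lambda>\lambda^*,\ t\in(0,T/2]. \] Then for all $x\in X$, \[ \|S_Tx\|_X\le C_{\mathrm{obs}}\Big(\int_0^T\|CS_tx\|_Y^r\,\mathrm{d}t\Big)^{1/r}\ \text{if }r\in[1,\infty),\qquad \|S_Tx\|_X\le C_{\mathrm{obs}}\operatorname*{ess\,sup}_{t\in[0,T]}\|CS_tx\|_Y\ \text{if }r=\infty, \] with \[ C_{\mathrm{obs}}=\frac{C_1}{T^{1/r}}\exp\Big(\frac{C_2}{T^{\gamma_1\gamma_3/(\gamma_2-\gamma_1)}}+C_3T\Big),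 \] where $T^{1/r}:=1$ if $r=\infty$, and \[ C_1=(4Md_0)\max\Big\{\big(4d_2M^2(d_0\|C\|+1)\big)^{8/(e\ln2)},\ e^{4d_1(2\lambda^* )^{\gamma_1}}\Big\}, \] \[ C_2=4\Big(2^{\gamma_1}(2\cdot4^{\gamma_3})^{\frac{\gamma_1\gamma_2}{\gamma_2-\gamma_1}}d_1^{\gamma_2}/d_3^{\gamma_1}\Big)^{\frac{1}{\gamma_2-\gamma_1}},\qquad C_3=\max\{\omega,0\}\big(1+10/(e\ln2)\big). \]
   Context: No strong continuity of the semigroup is assumed. *)

theory Defs
  imports "HOL-Analysis.Analysis" "HOL-Probability.Essential_Supremum"
begin

end

theory Submission
  imports Defs
begin

text \<open>
  Cut [0, T] at the dyadic times T/2^k. On the piece ending at T/2^k, split S_s x into its part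
  in the range of P at a level \<mu>_k and the remainder: the uncertainty relation controls the first part
  by the observation at time s, and the dissipation estimate makes the second one tiny compared with
  the state at time T/2^(k+1). Hence the state at T/2^k is bounded by the observation plus a factor
  \<rho>_k \<le> 1/8 times the state at T/2^(k+1). The levels are chosen so that \<eta>_k = d1 \<mu>_k^\<gamma>1 grows at most by
  the factor 2^\<kappa> from one piece to the next, while the dissipation factor on the k-th piece is at
  most exp (-4 2^\<kappa> \<eta>_k); so the products of the \<rho>_j beat the growing uncertainty constants
  exp \<eta>_k, and iterating the estimate gives a geometric series.
  Averaging (for L^r) or taking the essential supremum on each piece, whose length is a 2^-(k+2)
  fraction of T, turns the pointwise observation into the stated norms.
\<close>

lemma recursive_inequality_telescoped:
  fixes f a \<beta> :: "nat \<Rightarrow> real"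
  assumes rec: "\<And>k. f k \<le> a k + \<beta> k * f (Suc k)" and \<beta>: "\<And>k. 0 \<le> \<beta> k"
  shows "f 0 \<le> (\<Sum>k<n. (\<Prod>j<k. \<beta> j) * a k) + (\<Prod>j<n. \<beta> j) * f n"
proof (induction n)
  case (Suc n)
  have "(\<Prod>j<n. \<beta> j) * f n \<le> (\<Prod>j<n. \<beta> j) * (a n + \<beta> n * f (Suc n))"
    using rec \<beta> by (intro mult_left_mono) (auto intro: prod_nonneg)
  with Suc.IH show ?case
    by (simp add: algebra_simps)
qed simp

lemma le_of_recursive_inequality:
  fixes f a \<beta> :: "nat \<Rightarrow> real"
  assumes rec: "\<And>k. f k \<le> a k + \<beta> k * f (Suc k)" and \<beta>: "\<And>k. 0 \<le> \<beta> k"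
    and f_bounded: "\<And>k. \<bar>f k\<bar> \<le> F"
    and prod_\<beta>: "(\<lambda>n. \<Prod>j<n. \<beta> j) \<longlonglongrightarrow> 0"
    and partial_sums: "\<And>n. (\<Sum>k<n. (\<Prod>j<k. \<beta> j) * a k) \<le> A"
  shows "f 0 \<le> A"
proof (rule tendsto_le[OF sequentially_bot])
  have "(\<lambda>n. (\<Prod>j<n. \<beta> j) * f n) \<longlonglongrightarrow> 0"
  proof (rule Lim_null_comparison)
    show "\<forall>\<^sub>F n in sequentially. norm ((\<Prod>j<n. \<beta> j) * f n) \<le> (\<Prod>j<n. \<beta> j) * F"
      using f_bounded \<beta> by (intro always_eventually allI)
        (simp add: abs_mult prod_nonneg mult_left_mono)
    show "(\<lambda>n. (\<Prod>j<n. \<beta> j) * F) \<longlonglongrightarrow> 0"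
      by (rule tendsto_mult_left_zero[OF prod_\<beta>])
  qed
  then show "(\<lambda>n. A + (\<Prod>j<n. \<beta> j) * f n) \<longlonglongrightarrow> A"
    using tendsto_add[OF tendsto_const, of _ 0 _ A] by simp
  show "\<forall>\<^sub>F n in sequentially. f 0 \<le> A + (\<Prod>j<n. \<beta> j) * f n"
    using recursive_inequality_telescoped[of f a \<beta>, OF rec \<beta>] partial_sums
    by (intro always_eventually allI) (smt (verit))
qed simp

lemma norm_le_observation_plus_defect:
  fixes C :: "'a::real_normed_vector \<Rightarrow>\<^sub>L 'b::real_normed_vector" and p :: "'a \<Rightarrow> 'a"
  assumes obs: "norm (p z) \<le> a * norm (C (p z))" and a: "0 \<le> a"
  shows "norm z \<le> a * norm (C z) + (a * norm C + 1) * norm (z - p z)"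
proof -
  have "norm (C (p z)) \<le> norm (C z) + norm C * norm (z - p z)"
    using norm_triangle_ineq4[of "C z" "C (z - p z)"] norm_blinfun[of C "z - p z"]
    by (simp add: blinfun.diff_right)
  then have "norm (p z) \<le> a * norm (C z) + a * norm C * norm (z - p z)"
    using obs a by (smt (verit) distrib_left mult.assoc mult_left_mono)
  moreover have "norm z \<le> norm (p z) + norm (z - p z)"
    using norm_triangle_ineq[of "p z" "z - p z"] by simp
  ultimately show ?thesis
    by (simp add: algebra_simps)
qed

lemma le_esssup_of_le_on:
  assumes I: "I \<in> sets M" "0 < emeasure M I" and le: "\<And>x. x \<in> I \<Longrightarrow> c \<le> f x"
  shows "c \<le> esssup M f"
proof (rule ccontr)
  assume "\<not> c \<le> esssup M f"
  then have "f x \<le> esssup M f \<Longrightarrow> x \<notin> I" for x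
    using le[of x] by auto
  then have "AE x in M. x \<notin> I"
    using esssup_AE[of f M] by auto
  then show False
    using I AE_iff_null_sets[of I M] by (simp add: null_sets_def)
qed

lemma le_Lp_average_of_le_on:
  fixes g :: "real \<Rightarrow> real"
  assumes int: "integrable (lebesgue_on A) (\<lambda>t. g t powr r)" and A: "A \<in> sets lebesgue"
    and r: "0 < r" and I: "I \<subseteq> A" "I \<in> sets lebesgue" "0 < measure lebesgue I"
    and le: "\<And>t. t \<in> I \<Longrightarrow> c \<le> g t"
  shows "c \<le> ((LINT t:A|lebesgue. g t powr r) / measure lebesgue I) powr (1/r)"
proof (cases "c \<le> 0")
  case False
  have fin: "emeasure lebesgue I \<noteq> \<infinity>"
    using I(3) measure_zero_top by fastforce
  have "measure lebesgue I * c powr r = (LINT t:I|lebesgue. c powr r)"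
    by (simp add: set_integral_const[OF I(2) fin])
  also have "\<dots> \<le> (LINT t:A|lebesgue. g t powr r)"
    unfolding set_lebesgue_integral_def
  proof (rule integral_mono)
    show "integrable lebesgue (\<lambda>t. indicat_real I t *\<^sub>R c powr r)"
      using I(2) fin by (simp add: less_top)
    show "integrable lebesgue (\<lambda>t. indicat_real A t *\<^sub>R g t powr r)"
      using int A by (simp add: integrable_restrict_space)
    show "indicat_real I t *\<^sub>R c powr r \<le> indicat_real A t *\<^sub>R g t powr r" for t
      using I(1) le[of t] False r by (auto simp: indicator_def intro: powr_mono2)
  qed
  finally have "c powr r \<le> (LINT t:A|lebesgue. g t powr r) / measure lebesgue I"
    using I(3) by (simp add: pos_le_divide_eq mult.commute)
  then have "(c powr r) powr (1/r) \<le> ((LINT t:A|lebesgue. g t powr r) / measure lebesgue I) powr (1/r)"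
    using r False by (intro powr_mono2) auto
  then show ?thesis
    using r False by (simp add: powr_powr)
qed (meson order.trans powr_ge_zero)

lemma ln_4: "ln (4::real) = 2 * ln 2"
  using ln_realpow[of 2 2] by simp

lemma two_le_8_div_exp_ln2: "2 \<le> 8 / (exp 1 * ln (2::real))"
proof -
  have "exp 1 * ln (2::real) \<le> 3 * 1"
    using exp_le ln_le_minus_one[of 2] by (intro mult_mono) auto
  then show ?thesis
    by (simp add: field_simps)
qed

locale uncertainty_dissipation =
  fixes C :: "'a::banach \<Rightarrow>\<^sub>L 'b::banach"
    and S P :: "real \<Rightarrow> ('a \<Rightarrow>\<^sub>L 'a)"
    and M \<omega> lamS d0 d1 d2 d3 \<gamma>1 \<gamma>2 \<gamma>3 T :: real
  assumes S_add: "\<And>t s. t \<ge> 0 \<Longrightarrow> s \<ge> 0 \<Longrightarrow> S (t + s) = S t o\<^sub>L S s"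
    and M_ge_1: "M \<ge> 1"
    and norm_S_le_exp: "\<And>t. t \<ge> 0 \<Longrightarrow> norm (S t) \<le> M * exp (\<omega> * t)"
    and observation_measurable: "\<And>x. (\<lambda>t. norm (C (S t x))) \<in> borel_measurable (lebesgue_on {0..})"
    and lamS_nonneg: "lamS \<ge> 0"
    and d0_pos: "d0 > 0" and d1_pos: "d1 > 0" and d3_pos: "d3 > 0"
    and \<gamma>1_pos: "\<gamma>1 > 0" and \<gamma>3_pos: "\<gamma>3 > 0" and T_pos: "T > 0"
    and \<gamma>1_less_\<gamma>2: "\<gamma>1 < \<gamma>2"
    and d2_ge_1: "d2 \<ge> 1"
    and uncertainty: "\<And>x l. l > lamS \<Longrightarrow>
               norm (P l x) \<le> d0 * exp (d1 * l powr \<gamma>1) * norm (C (P l x))"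
    and dissipation: "\<And>x l t. l > lamS \<Longrightarrow> t \<in> {0<..T/2} \<Longrightarrow>
               norm (S t x - P l (S t x)) \<le> d2 * exp (- d3 * l powr \<gamma>2 * t powr \<gamma>3) * norm x"
begin

definition K :: real where "K = M * d2 * (d0 * norm C + 1)"
definition \<sigma> :: real where "\<sigma> = ln (8 * K)"
definition L :: real where "L = d1 * (2 * lamS) powr \<gamma>1"
definition \<kappa> :: real where "\<kappa> = \<gamma>1 * \<gamma>3 / (\<gamma>2 - \<gamma>1)"
definition X :: real where "X = (2 powr \<gamma>1 * (2 * 4 powr \<gamma>3) powr (\<gamma>1 * \<gamma>2 / (\<gamma>2 - \<gamma>1))
                        * d1 powr \<gamma>2 / d3 powr \<gamma>1) powr (1 / (\<gamma>2 - \<gamma>1))"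

text \<open>
  On the k-th dyadic piece the spectral level is \<mu> k, for which the uncertainty constant is
  exp (\<eta> k). Each lower bound in \<eta> serves one purpose: the first gives
  d3 \<mu>_k^\<gamma>2 t^\<gamma>3 \<ge> 4 2^\<kappa> \<eta> k for t \<ge> T/2^(k+2), \<sigma> gives \<rho> k exp (\<eta> (Suc k)) \<le> 1/8,
  and L gives lamS < \<mu> k.
\<close>
definition \<eta> :: "nat \<Rightarrow> real" where "\<eta> k = max (X * (T / 2^k) powr (- \<kappa>)) (max \<sigma> L)"
definition \<mu> :: "nat \<Rightarrow> real" where "\<mu> k = (\<eta> k / d1) powr (1 / \<gamma>1)"
definition \<rho> :: "nat \<Rightarrow> real" where "\<rho> k = K * exp ((1 - 4 * 2 powr \<kappa>) * \<eta> k)"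
definition growth :: "nat \<Rightarrow> real" where "growth k = exp (max \<omega> 0 * (T / 2^(k+2)))"
definition obs_weight :: "nat \<Rightarrow> real" where "obs_weight k = M * d0 * growth k * exp (\<eta> k)"

definition C1 :: real where "C1 = (4 * M * d0) * max ((4 * d2 * M\<^sup>2 * (d0 * norm C + 1)) powr (8 / (exp 1 * ln 2)))
                                    (exp (4 * d1 * (2 * lamS) powr \<gamma>1))"
definition C2 :: real where "C2 = 4 * X"
definition C3 :: real where "C3 = max \<omega> 0 * (1 + 10 / (exp 1 * ln 2))"

lemma K_ge_1: "1 \<le> K"
  unfolding K_def using M_ge_1 d2_ge_1 d0_pos
  by (metis le_add_same_cancel2 mult_ge1_I norm_ge_zero zero_le_mult_iff less_imp_le)

lemma \<sigma>_pos: "0 < \<sigma>"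
  unfolding \<sigma>_def using K_ge_1 by simp

lemma \<kappa>_pos: "0 < \<kappa>"
  unfolding \<kappa>_def using \<gamma>1_pos \<gamma>3_pos \<gamma>1_less_\<gamma>2 by simp

lemma X_pos: "0 < X"
  unfolding X_def using d1_pos d3_pos by simp

lemma L_nonneg: "0 \<le> L"
  unfolding L_def using d1_pos by simp

lemma \<eta>_ge: "\<sigma> \<le> \<eta> k" "L \<le> \<eta> k" "X * (T / 2^k) powr (- \<kappa>) \<le> \<eta> k"
  unfolding \<eta>_def by auto

lemma \<eta>_pos: "0 < \<eta> k"
  using \<eta>_ge(1) \<sigma>_pos by (rule less_le_trans[rotated])

lemma one_le_two_powr_\<kappa>: "1 \<le> 2 powr \<kappa>"
  using \<kappa>_pos by (simp add: ge_one_powr_ge_zero)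

lemma \<eta>_le_two_powr_\<kappa>: "\<eta> k \<le> 2 powr \<kappa> * \<eta> k"
  using mult_right_mono[OF one_le_two_powr_\<kappa> less_imp_le[OF \<eta>_pos]] by simp

lemma \<eta>_Suc_le: "\<eta> (Suc k) \<le> 2 powr \<kappa> * \<eta> k"
proof -
  have "X * (T / 2^Suc k) powr (- \<kappa>) = 2 powr \<kappa> * (X * (T / 2^k) powr (- \<kappa>))"
    using T_pos by (simp add: powr_divide powr_minus_divide powr_mult)
  also have "\<dots> \<le> 2 powr \<kappa> * \<eta> k"
    using \<eta>_ge(3) by (intro mult_left_mono) auto
  finally have "X * (T / 2^Suc k) powr (- \<kappa>) \<le> 2 powr \<kappa> * \<eta> k" .
  then show ?thesis
    using \<eta>_ge(1,2)[of k] \<eta>_le_two_powr_\<kappa>[of k] unfolding \<eta>_def[of "Suc k"] by simp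
qed

lemma d1_\<mu>_powr: "d1 * \<mu> k powr \<gamma>1 = \<eta> k"
  unfolding \<mu>_def using \<gamma>1_pos \<eta>_pos[of k] d1_pos by (simp add: powr_powr)

lemma lamS_less_\<mu>: "lamS < \<mu> k"
proof -
  have "(2 * lamS) powr \<gamma>1 \<le> \<eta> k / d1"
    using \<eta>_ge(2)[of k] d1_pos unfolding L_def by (simp add: field_simps)
  then have "((2 * lamS) powr \<gamma>1) powr (1 / \<gamma>1) \<le> \<mu> k"
    unfolding \<mu>_def using \<gamma>1_pos by (intro powr_mono2) auto
  then have "2 * lamS \<le> \<mu> k"
    using \<gamma>1_pos lamS_nonneg by (simp add: powr_powr)
  moreover have "0 < \<mu> k"
    unfolding \<mu>_def using \<eta>_pos[of k] d1_pos by simp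
  ultimately show ?thesis
    using lamS_nonneg by linarith
qed

lemma ln_X:
  "ln X = (\<gamma>1 * ln 2 + (\<gamma>1 * \<gamma>2 / (\<gamma>2 - \<gamma>1)) * (ln 2 + \<gamma>3 * (2 * ln 2))
            + \<gamma>2 * ln d1 - \<gamma>1 * ln d3) / (\<gamma>2 - \<gamma>1)"
proof -
  define Y where "Y = 2 powr \<gamma>1 * (2 * 4 powr \<gamma>3) powr (\<gamma>1 * \<gamma>2 / (\<gamma>2 - \<gamma>1))
                        * d1 powr \<gamma>2 / d3 powr \<gamma>1"
  have "ln (2 * 4 powr \<gamma>3 :: real) = ln 2 + \<gamma>3 * (2 * ln 2)"
    by (simp add: ln_mult ln_4)
  moreover have "ln Y = ln (2 powr \<gamma>1) + ln ((2 * 4 powr \<gamma>3) powr (\<gamma>1 * \<gamma>2 / (\<gamma>2 - \<gamma>1)))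
      + ln (d1 powr \<gamma>2) - ln (d3 powr \<gamma>1)"
    unfolding Y_def using d1_pos d3_pos by (simp add: ln_mult ln_div del: ln_powr)
  moreover have "X = Y powr (1 / (\<gamma>2 - \<gamma>1))"
    unfolding X_def Y_def ..
  ultimately show ?thesis
    by simp
qed

text \<open>Taking logarithms, the difference of the two sides is a sum of three nonnegative terms.\<close>
lemma dissipation_dominates:
  assumes s: "0 < s" and t: "s / 4 \<le> t" and e: "X * s powr (- \<kappa>) \<le> e"
  shows "4 * 2 powr \<kappa> * e \<le> d3 * ((e / d1) powr (1 / \<gamma>1)) powr \<gamma>2 * t powr \<gamma>3"
proof -
  define \<nu> where "\<nu> = \<gamma>2 - \<gamma>1"
  have \<nu>: "0 < \<nu>" and \<gamma>2_eq: "\<gamma>2 = \<gamma>1 + \<nu>"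
    using \<gamma>1_less_\<gamma>2 \<nu>_def by simp_all
  have t_pos: "0 < t"
    using s t by simp
  have "0 < X * s powr (- \<kappa>)"
    using X_pos s by simp
  with e have e_pos: "0 < e"
    by linarith
  have "ln (X * s powr (- \<kappa>)) \<le> ln e"
    using e e_pos X_pos s by (subst ln_le_cancel_iff) auto
  then have ln_e: "ln X - \<kappa> * ln s \<le> ln e"
    using X_pos s by (simp add: ln_mult)
  have "ln (s / 4) \<le> ln t"
    using t s by (subst ln_le_cancel_iff) auto
  then have ln_t: "ln s - 2 * ln 2 \<le> ln t"
    using s ln_4 by (simp add: ln_div)
  have "ln (4 * 2 powr \<kappa> * e) = 2 * ln 2 + \<kappa> * ln 2 + ln e"
    using e_pos ln_4 by (simp add: ln_mult)
  also have "\<dots> \<le> ln d3 + \<gamma>2 * ((1 / \<gamma>1) * (ln e - ln d1)) + \<gamma>3 * ln t"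
  proof -
    have identity: "(ln d3 + \<gamma>2 * ((1 / \<gamma>1) * (ln e - ln d1)) + \<gamma>3 * ln t) - (2 * ln 2 + \<kappa> * ln 2 + ln e)
        = (\<nu> / \<gamma>1) * (ln e - (ln X - \<kappa> * ln s)) + \<gamma>3 * (ln t - ln s + 2 * ln 2)
          + (\<gamma>1 / \<nu>) * ln 2 + \<kappa> * ln 2"
      unfolding ln_X \<kappa>_def \<nu>_def[symmetric] unfolding \<gamma>2_eq using \<gamma>1_pos \<nu>
      by (simp add: field_simps)
    have "0 \<le> (\<nu> / \<gamma>1) * (ln e - (ln X - \<kappa> * ln s))"
      using ln_e \<nu> \<gamma>1_pos by simp
    moreover have "0 \<le> \<gamma>3 * (ln t - ln s + 2 * ln 2)"
      using ln_t \<gamma>3_pos by simp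
    moreover have "0 \<le> (\<gamma>1 / \<nu>) * ln 2 + \<kappa> * ln 2"
      using \<gamma>1_pos \<nu> \<kappa>_pos by simp
    ultimately show ?thesis
      using identity by linarith
  qed
  also have "\<dots> = ln (d3 * ((e / d1) powr (1 / \<gamma>1)) powr \<gamma>2 * t powr \<gamma>3)"
    using e_pos d1_pos d3_pos t_pos by (simp add: ln_mult ln_div)
  finally show ?thesis
    using e_pos d1_pos d3_pos t_pos by (subst (asm) ln_le_cancel_iff) auto
qed

lemma \<eta>_decay:
  assumes "T / 2^(k+2) \<le> t"
  shows "4 * 2 powr \<kappa> * \<eta> k \<le> d3 * \<mu> k powr \<gamma>2 * t powr \<gamma>3"
  unfolding \<mu>_def
proof (rule dissipation_dominates)
  show "0 < T / 2^k"
    using T_pos by simp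
  show "T / 2^k / 4 \<le> t"
    using assms by (simp add: power_add)
qed (rule \<eta>_ge(3))

lemma norm_S_le:
  assumes "0 \<le> t" "t \<le> h"
  shows "norm (S t) \<le> M * exp (max \<omega> 0 * h)"
proof -
  have "\<omega> * t \<le> max \<omega> 0 * t"
    using assms(1) by (intro mult_right_mono) auto
  also have "\<dots> \<le> max \<omega> 0 * h"
    using assms by (intro mult_left_mono) auto
  finally have "M * exp (\<omega> * t) \<le> M * exp (max \<omega> 0 * h)"
    using M_ge_1 by simp
  with norm_S_le_exp[OF assms(1)] show ?thesis
    by linarith
qed

lemma norm_S_le_observation_plus_decay:
  assumes t: "T / 2^(k+2) \<le> t" "t \<le> T / 2"
  shows "norm (S t y) \<le> d0 * exp (\<eta> k) * norm (C (S t y))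
           + d2 * (d0 * norm C + 1) * exp ((1 - 4 * 2 powr \<kappa>) * \<eta> k) * norm y"
proof -
  define z where "z = S t y"
  define defect where "defect = norm (z - P (\<mu> k) z)"
  have "0 < T / 2^(k+2)"
    using T_pos by simp
  with t(1) have "0 < t"
    by linarith
  then have "defect \<le> d2 * exp (- d3 * \<mu> k powr \<gamma>2 * t powr \<gamma>3) * norm y"
    unfolding defect_def z_def using dissipation[OF lamS_less_\<mu>[of k]] t(2) by simp
  also have "\<dots> \<le> d2 * exp (- 4 * 2 powr \<kappa> * \<eta> k) * norm y"
    using \<eta>_decay[OF t(1)] d2_ge_1 by (intro mult_right_mono mult_left_mono) auto
  finally have defect: "defect \<le> d2 * exp (- 4 * 2 powr \<kappa> * \<eta> k) * norm y" .
  have "norm z \<le> d0 * exp (\<eta> k) * norm (C z) + (d0 * exp (\<eta> k) * norm C + 1) * defect"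
    unfolding defect_def
    using uncertainty[OF lamS_less_\<mu>[of k], of z] d0_pos d1_\<mu>_powr[of k]
    by (intro norm_le_observation_plus_defect) auto
  also have "\<dots> \<le> d0 * exp (\<eta> k) * norm (C z) + (d0 * norm C + 1) * exp (\<eta> k) * defect"
  proof -
    have "d0 * exp (\<eta> k) * norm C + 1 \<le> (d0 * norm C + 1) * exp (\<eta> k)"
      using \<eta>_pos[of k] by (simp add: algebra_simps)
    then show ?thesis
      unfolding defect_def by (simp add: mult_right_mono)
  qed
  also have "\<dots> \<le> d0 * exp (\<eta> k) * norm (C z)
      + (d0 * norm C + 1) * exp (\<eta> k) * (d2 * exp (- 4 * 2 powr \<kappa> * \<eta> k) * norm y)"
    using defect d0_pos by (simp add: mult_left_mono)
  also have "\<dots> = d0 * exp (\<eta> k) * norm (C z)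
      + d2 * (d0 * norm C + 1) * exp ((1 - 4 * 2 powr \<kappa>) * \<eta> k) * norm y"
    by (simp add: algebra_simps mult_exp_exp)
  finally show ?thesis
    unfolding z_def .
qed

lemma dyadic_step:
  assumes s: "s \<in> {3 * T / 2^(k+2) .. T / 2^k}"
  shows "norm (S (T / 2^k) x) \<le> obs_weight k * norm (C (S s x))
           + growth k * \<rho> k * norm (S (T / 2^Suc k) x)"
proof -
  define \<tau> where "\<tau> = T / 2^(k+2)"
  have \<tau>: "0 < \<tau>" "T / 2^Suc k = 2 * \<tau>" "T / 2^k = 4 * \<tau>" "3 * T / 2^(k+2) = 3 * \<tau>"
    unfolding \<tau>_def using T_pos by (simp_all add: power_add)
  have "(4::real) \<le> 2^(k+2)"
    by (simp add: power_add)
  then have "\<tau> \<le> T / 4"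
    unfolding \<tau>_def using T_pos by (intro divide_left_mono) auto
  define t where "t = s - 2 * \<tau>"
  have t: "\<tau> \<le> t" "t \<le> T / 2"
    using s \<open>\<tau> \<le> T / 4\<close> unfolding t_def \<tau>(3,4) by auto
  have "S s = S t o\<^sub>L S (2 * \<tau>)"
    using S_add[of t "2 * \<tau>"] t \<tau>(1) unfolding t_def by simp
  then have Ss: "S s x = S t (S (T / 2^Suc k) x)"
    unfolding \<tau>(2) by simp
  have "S (T / 2^k) = S (T / 2^k - s) o\<^sub>L S s"
    using S_add[of "T / 2^k - s" s] s \<tau>(1,4) by simp
  then have "norm (S (T / 2^k) x) \<le> norm (S (T / 2^k - s)) * norm (S s x)"
    by (simp add: norm_blinfun)
  also have "\<dots> \<le> M * growth k * norm (S s x)"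
    unfolding growth_def \<tau>_def[symmetric]
  proof (intro mult_right_mono norm_S_le)
    show "T / 2^k - s \<le> \<tau>"
      using s \<tau>(3) by simp
  qed (use s in auto)
  also have "\<dots> = M * growth k * norm (S t (S (T / 2^Suc k) x))"
    by (simp add: Ss)
  also have "\<dots> \<le> M * growth k * (d0 * exp (\<eta> k) * norm (C (S s x))
      + d2 * (d0 * norm C + 1) * exp ((1 - 4 * 2 powr \<kappa>) * \<eta> k) * norm (S (T / 2^Suc k) x))"
    using norm_S_le_observation_plus_decay[of k t] t M_ge_1
    unfolding Ss \<tau>_def by (intro mult_left_mono) (auto simp: growth_def)
  also have "\<dots> = obs_weight k * norm (C (S s x)) + growth k * \<rho> k * norm (S (T / 2^Suc k) x)"
    unfolding \<rho>_def K_def obs_weight_def by (simp add: algebra_simps)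
  finally show ?thesis .
qed

lemma \<rho>_nonneg: "0 \<le> \<rho> k"
  unfolding \<rho>_def using K_ge_1 by simp

lemma obs_weight_pos: "0 < obs_weight k"
  unfolding obs_weight_def growth_def using M_ge_1 d0_pos by simp

lemma \<rho>_exp_\<eta>_Suc_le: "\<rho> k * exp (\<eta> (Suc k)) \<le> 1 / 8"
proof -
  have "(1 - 4 * 2 powr \<kappa>) * \<eta> k = \<eta> k - 4 * (2 powr \<kappa> * \<eta> k)"
    by (simp add: algebra_simps)
  then have "(1 - 4 * 2 powr \<kappa>) * \<eta> k + \<eta> (Suc k) \<le> - \<sigma>"
    using \<eta>_Suc_le[of k] \<eta>_ge(1)[of k] \<eta>_pos[of k] \<eta>_le_two_powr_\<kappa>[of k] by linarith
  then have "K * exp ((1 - 4 * 2 powr \<kappa>) * \<eta> k + \<eta> (Suc k)) \<le> K * exp (- \<sigma>)"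
    using K_ge_1 by simp
  also have "K * exp (- \<sigma>) = 1 / 8"
    unfolding \<sigma>_def using K_ge_1 by (simp add: exp_minus)
  finally show ?thesis
    unfolding \<rho>_def by (simp add: exp_add mult.assoc)
qed

lemma \<rho>_le: "\<rho> k \<le> 1 / 8"
  using \<rho>_exp_\<eta>_Suc_le[of k] mult_left_mono[of 1 "exp (\<eta> (Suc k))" "\<rho> k"]
    \<rho>_nonneg[of k] \<eta>_pos[of "Suc k"] by simp

lemma prod_\<rho>_le: "(\<Prod>j<n. \<rho> j) \<le> (1/8)^n"
  using prod_mono[of "{..<n}" \<rho> "\<lambda>_. 1/8"] \<rho>_nonneg \<rho>_le by simp

lemma prod_growth_le: "(\<Prod>j<n. growth j) \<le> exp (max \<omega> 0 * T / 2)"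
proof -
  have "(\<Sum>j<n. T / 2^(j+2)) = T / 4 * (\<Sum>j<n. (1/2)^j)"
    by (simp add: sum_distrib_left power_add power_divide)
  also have "\<dots> \<le> T / 2"
    using T_pos by (simp add: sum_gp_strict)
  finally have "(\<Sum>j<n. T / 2^(j+2)) \<le> T / 2" .
  then have "max \<omega> 0 * (\<Sum>j<n. T / 2^(j+2)) \<le> max \<omega> 0 * (T / 2)"
    by (intro mult_left_mono) auto
  then show ?thesis
    unfolding growth_def by (simp add: exp_sum[symmetric] sum_distrib_left)
qed

lemma prod_\<rho>_exp_\<eta>_le: "(\<Prod>j<k. \<rho> j) * exp (\<eta> k) * 2^(k+2) \<le> 4 * exp (\<eta> 0) * (1/4)^k"
proof (cases k)
  case (Suc m)
  have "(\<Prod>j<m. \<rho> j) * (\<rho> m * exp (\<eta> (Suc m))) \<le> (1/8)^m * (1/8)"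
    using prod_\<rho>_le[of m] \<rho>_exp_\<eta>_Suc_le[of m] \<rho>_nonneg by (intro mult_mono) (auto intro: prod_nonneg)
  moreover have "(\<Prod>j<k. \<rho> j) * exp (\<eta> k) * 2^(k+2)
      = (\<Prod>j<m. \<rho> j) * (\<rho> m * exp (\<eta> (Suc m))) * 2^(m+3)"
    unfolding Suc by (simp add: algebra_simps power_add)
  ultimately have "(\<Prod>j<k. \<rho> j) * exp (\<eta> k) * 2^(k+2) \<le> (1/8)^Suc m * 2^(m+3)"
    by (simp add: mult_right_mono)
  also have "\<dots> = (1/8 * 2)^Suc m * 4"
    by (simp only: power_mult_distrib power_add) simp
  also have "\<dots> = (1/4)^Suc m * 4"
    by simp
  also have "\<dots> \<le> 4 * exp (\<eta> 0) * (1/4)^k"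
    unfolding Suc using \<eta>_pos[of 0] by simp
  finally show ?thesis .
qed simp

lemma max_exp_\<sigma>_L_le:
  "4 / 3 * max (8 * K) (exp L)
     \<le> max ((4 * d2 * M\<^sup>2 * (d0 * norm C + 1)) powr (8 / (exp 1 * ln 2))) (exp (4 * d1 * (2 * lamS) powr \<gamma>1))"
proof (cases "exp L \<le> 8 * K")
  case True
  define U where "U = 4 * d2 * M\<^sup>2 * (d0 * norm C + 1)"
  have U: "U = 4 * M * K"
    unfolding U_def K_def by (simp add: power2_eq_square)
  then have "4 * K \<le> U"
    using K_ge_1 M_ge_1 by simp
  have "4 / 3 * (8 * K) \<le> (4 * K)^2"
    using K_ge_1 by (simp add: power2_eq_square)
  also have "\<dots> \<le> U^2"
    using \<open>4 * K \<le> U\<close> K_ge_1 by (intro power_mono) auto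
  also have "\<dots> = U powr 2"
    using \<open>4 * K \<le> U\<close> K_ge_1 by (simp add: powr_realpow)
  also have "\<dots> \<le> U powr (8 / (exp 1 * ln 2))"
    using two_le_8_div_exp_ln2 \<open>4 * K \<le> U\<close> K_ge_1 by (intro powr_mono) auto
  finally show ?thesis
    using True unfolding U_def by simp
next
  case False
  moreover have "exp L \<le> exp (3 * L)"
    using L_nonneg by simp
  ultimately have "8 \<le> exp (3 * L)"
    using K_ge_1 by linarith
  then have "4 / 3 * exp L \<le> exp L * exp (3 * L)"
    by simp
  also have "\<dots> = exp (4 * L)"
    by (simp flip: exp_add)
  finally show ?thesis
    using False unfolding L_def by (simp add: mult.assoc)
qed

lemma dyadic_exponent_le: "max \<omega> 0 * T / 2 + X / T powr \<kappa> \<le> C2 / T powr \<kappa> + C3 * T"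
proof -
  have X_le: "X / T powr \<kappa> \<le> C2 / T powr \<kappa>"
    unfolding C2_def using X_pos T_pos by (intro divide_right_mono) auto
  have "1 / 2 \<le> 1 + 10 / (exp 1 * ln (2::real))"
    by (simp add: add_increasing2)
  then have "max \<omega> 0 * T * (1 / 2) \<le> max \<omega> 0 * T * (1 + 10 / (exp 1 * ln 2))"
    using T_pos by (intro mult_left_mono) auto
  then have "max \<omega> 0 * T / 2 \<le> C3 * T"
    unfolding C3_def by (simp add: algebra_simps)
  with X_le show ?thesis
    by linarith
qed

lemma dyadic_constant_le:
  "16 / 3 * M * d0 * exp (max \<omega> 0 * T / 2) * exp (\<eta> 0) \<le> C1 * exp (C2 / T powr \<kappa> + C3 * T)"
proof -
  have "\<eta> 0 \<le> X / T powr \<kappa> + max \<sigma> L"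
    unfolding \<eta>_def using X_pos T_pos \<sigma>_pos by (auto simp: powr_minus_divide)
  then have "exp (\<eta> 0) \<le> exp (X / T powr \<kappa>) * exp (max \<sigma> L)"
    by (simp flip: exp_add)
  also have "exp (max \<sigma> L) = max (exp \<sigma>) (exp L)"
    by (simp add: max_def)
  also have "exp \<sigma> = 8 * K"
    unfolding \<sigma>_def using K_ge_1 by simp
  finally have exp_\<eta>: "exp (\<eta> 0) \<le> exp (X / T powr \<kappa>) * max (8 * K) (exp L)" .
  have "exp (max \<omega> 0 * T / 2) * exp (\<eta> 0) \<le> exp (C2 / T powr \<kappa> + C3 * T) * max (8 * K) (exp L)"
  proof -
    have "exp (max \<omega> 0 * T / 2) * exp (\<eta> 0) \<le> exp (max \<omega> 0 * T / 2 + X / T powr \<kappa>) * max (8 * K) (exp L)"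
      using mult_left_mono[OF exp_\<eta>, of "exp (max \<omega> 0 * T / 2)"] by (simp add: exp_add mult.assoc)
    also have "\<dots> \<le> exp (C2 / T powr \<kappa> + C3 * T) * max (8 * K) (exp L)"
      using dyadic_exponent_le K_ge_1 by (intro mult_right_mono) auto
    finally show ?thesis .
  qed
  then have "16 / 3 * M * d0 * exp (max \<omega> 0 * T / 2) * exp (\<eta> 0)
      \<le> 4 * M * d0 * (4 / 3 * max (8 * K) (exp L)) * exp (C2 / T powr \<kappa> + C3 * T)"
    using M_ge_1 d0_pos by (simp add: algebra_simps mult_left_mono)
  also have "\<dots> \<le> C1 * exp (C2 / T powr \<kappa> + C3 * T)"
    unfolding C1_def using max_exp_\<sigma>_L_le M_ge_1 d0_pos by (simp add: mult_left_mono mult_right_mono)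
  finally show ?thesis .
qed

lemma prod_growth_\<rho>_tendsto_0: "(\<lambda>n. \<Prod>j<n. growth j * \<rho> j) \<longlonglongrightarrow> 0"
proof (rule tendsto_sandwich[OF _ _ tendsto_const])
  show "\<forall>\<^sub>F n in sequentially. 0 \<le> (\<Prod>j<n. growth j * \<rho> j)"
    using \<rho>_nonneg by (simp add: prod_nonneg growth_def)
  show "\<forall>\<^sub>F n in sequentially. (\<Prod>j<n. growth j * \<rho> j) \<le> exp (max \<omega> 0 * T / 2) * (1/8)^n"
    unfolding prod.distrib using prod_growth_le prod_\<rho>_le \<rho>_nonneg
    by (intro always_eventually allI mult_mono) (auto intro: prod_nonneg)
  show "(\<lambda>n. exp (max \<omega> 0 * T / 2) * (1/8::real)^n) \<longlonglongrightarrow> 0"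
    by (intro tendsto_mult_right_zero LIMSEQ_realpow_zero) auto
qed

lemma sum_obs_weight_le:
  "(\<Sum>k<n. (\<Prod>j<k. growth j * \<rho> j) * (obs_weight k * 2^(k+2)))
     \<le> 16 / 3 * M * d0 * exp (max \<omega> 0 * T / 2) * exp (\<eta> 0)"
proof -
  have "(\<Prod>j<k. growth j * \<rho> j) * (obs_weight k * 2^(k+2))
      = (\<Prod>j<Suc k. growth j) * (M * d0) * ((\<Prod>j<k. \<rho> j) * exp (\<eta> k) * 2^(k+2))" for k
    unfolding obs_weight_def prod.distrib by (simp add: algebra_simps)
  also have "\<dots> k \<le> exp (max \<omega> 0 * T / 2) * (M * d0) * (4 * exp (\<eta> 0) * (1/4)^k)" for k
    using M_ge_1 d0_pos \<rho>_nonneg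
    by (intro mult_mono[OF mult_right_mono[OF prod_growth_le] prod_\<rho>_exp_\<eta>_le])
      (auto intro!: mult_nonneg_nonneg prod_nonneg simp: growth_def)
  finally have "(\<Sum>k<n. (\<Prod>j<k. growth j * \<rho> j) * (obs_weight k * 2^(k+2)))
      \<le> exp (max \<omega> 0 * T / 2) * (M * d0) * (4 * exp (\<eta> 0)) * (\<Sum>k<n. (1/4)^k)"
    by (simp add: sum_distrib_left sum_mono mult.assoc)
  also have "\<dots> \<le> exp (max \<omega> 0 * T / 2) * (M * d0) * (4 * exp (\<eta> 0)) * (4 / 3)"
    using M_ge_1 d0_pos by (intro mult_left_mono) (auto simp: sum_gp_strict)
  finally show ?thesis
    by (simp add: algebra_simps)
qed

lemma norm_S_dyadic_le: "norm (S (T / 2^k) x) \<le> M * exp (max \<omega> 0 * T) * norm x"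
proof -
  have "T / 2^k \<le> T"
    using T_pos by (simp add: divide_le_eq_1 field_simps)
  then have "norm (S (T / 2^k)) \<le> M * exp (max \<omega> 0 * T)"
    using T_pos by (intro norm_S_le) auto
  then show ?thesis
    using norm_blinfun[of "S (T / 2^k)" x] by (meson mult_right_mono norm_ge_zero order_trans)
qed

lemma norm_S_T_le:
  assumes \<Psi>: "0 \<le> \<Psi>"
    and lower_bound: "\<And>k c. (\<And>s. s \<in> {3 * T / 2^(k+2) .. T / 2^k} \<Longrightarrow> c \<le> norm (C (S s x)))
                         \<Longrightarrow> c \<le> 2^(k+2) * \<Psi>"
  shows "norm (S T x) \<le> C1 * exp (C2 / T powr \<kappa> + C3 * T) * \<Psi>"
proof -
  define f where "f k = norm (S (T / 2^k) x)" for k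
  have recursion: "f k \<le> obs_weight k * 2^(k+2) * \<Psi> + growth k * \<rho> k * f (Suc k)" for k
  proof -
    have "(f k - growth k * \<rho> k * f (Suc k)) / obs_weight k \<le> 2^(k+2) * \<Psi>"
    proof (rule lower_bound)
      fix s assume "s \<in> {3 * T / 2^(k+2) .. T / 2^k}"
      from dyadic_step[OF this] show "(f k - growth k * \<rho> k * f (Suc k)) / obs_weight k \<le> norm (C (S s x))"
        using obs_weight_pos[of k] unfolding f_def by (simp add: pos_divide_le_eq algebra_simps)
    qed
    then show ?thesis
      using obs_weight_pos[of k] by (simp add: pos_divide_le_eq algebra_simps)
  qed
  have "f 0 \<le> 16 / 3 * M * d0 * exp (max \<omega> 0 * T / 2) * exp (\<eta> 0) * \<Psi>"
  proof (rule le_of_recursive_inequality[of f "\<lambda>k. obs_weight k * 2^(k+2) * \<Psi>" "\<lambda>k. growth k * \<rho> k",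
        OF recursion])
    show "0 \<le> growth k * \<rho> k" for k
      using \<rho>_nonneg by (simp add: growth_def)
    show "\<bar>f k\<bar> \<le> M * exp (max \<omega> 0 * T) * norm x" for k
      unfolding f_def by (simp add: norm_S_dyadic_le)
    show "(\<Sum>k<n. (\<Prod>j<k. growth j * \<rho> j) * (obs_weight k * 2^(k+2) * \<Psi>))
        \<le> 16 / 3 * M * d0 * exp (max \<omega> 0 * T / 2) * exp (\<eta> 0) * \<Psi>" for n
      using mult_right_mono[OF sum_obs_weight_le \<Psi>] by (simp add: sum_distrib_right mult.assoc)
  qed (rule prod_growth_\<rho>_tendsto_0)
  also have "\<dots> \<le> C1 * exp (C2 / T powr \<kappa> + C3 * T) * \<Psi>"
    using dyadic_constant_le \<Psi> by (rule mult_right_mono)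
  finally show ?thesis
    unfolding f_def by simp
qed

lemma dyadic_interval_subset: "{3 * T / 2^(k+2) .. T / 2^k} \<subseteq> {0..T}"
proof -
  have "T / 2^k \<le> T"
    using T_pos by (simp add: divide_le_eq_1 field_simps)
  then show ?thesis
    using T_pos by auto
qed

lemma measure_dyadic_interval: "measure lebesgue {3 * T / 2^(k+2) .. T / 2^k} = T / 2^(k+2)"
  using T_pos by (simp add: power_add field_simps)

lemma integrable_observation_powr:
  assumes "0 \<le> r"
  shows "integrable (lebesgue_on {0..T}) (\<lambda>t. norm (C (S t x)) powr r)"
proof (rule finite_measure.integrable_const_bound)
  show "finite_measure (lebesgue_on {0..T})"
    by (simp add: finite_measure_lebesgue_on)
  show "(\<lambda>t. norm (C (S t x)) powr r) \<in> borel_measurable (lebesgue_on {0..T})"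
    using measurable_restrict_mono[OF observation_measurable, of "{0..T}"] by measurable
  have "norm (C (S t x)) \<le> norm C * (M * exp (max \<omega> 0 * T)) * norm x" if "t \<in> {0..T}" for t
  proof -
    have "norm (C (S t x)) \<le> norm C * (norm (S t) * norm x)"
      by (meson norm_blinfun mult_left_mono norm_ge_zero order_trans)
    also have "\<dots> \<le> norm C * (M * exp (max \<omega> 0 * T) * norm x)"
      using norm_S_le[of t T] that by (intro mult_left_mono mult_right_mono) auto
    finally show ?thesis
      by (simp add: mult.assoc)
  qed
  then show "AE t in lebesgue_on {0..T}. norm (norm (C (S t x)) powr r)
      \<le> (norm C * (M * exp (max \<omega> 0 * T)) * norm x) powr r"
    using assms by (intro AE_I2) (auto intro: powr_mono2)
qed

lemma observability_Lr:
  assumes r: "1 \<le> r"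
  shows "norm (S T x) \<le> C1 / T powr (1 / r) * exp (C2 / T powr \<kappa> + C3 * T)
           * (LINT t:{0..T}|lebesgue. norm (C (S t x)) powr r) powr (1 / r)"
proof -
  define I where "I = (LINT t:{0..T}|lebesgue. norm (C (S t x)) powr r)"
  have "norm (S T x) \<le> C1 * exp (C2 / T powr \<kappa> + C3 * T) * (I powr (1 / r) / T powr (1 / r))"
  proof (rule norm_S_T_le)
    fix k c assume le: "\<And>s. s \<in> {3 * T / 2^(k+2) .. T / 2^k} \<Longrightarrow> c \<le> norm (C (S s x))"
    have "c \<le> (I / (T / 2^(k+2))) powr (1 / r)"
      unfolding I_def measure_dyadic_interval[symmetric]
      using r T_pos dyadic_interval_subset measure_dyadic_interval
      by (intro le_Lp_average_of_le_on integrable_observation_powr le) auto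
    also have "\<dots> = (2^(k+2)) powr (1 / r) * (I powr (1 / r) / T powr (1 / r))"
      using T_pos by (simp add: powr_divide powr_mult)
    also have "\<dots> \<le> 2^(k+2) * (I powr (1 / r) / T powr (1 / r))"
    proof (rule mult_right_mono)
      have "(2^(k+2)::real) powr (1 / r) \<le> (2^(k+2)) powr 1"
        using r one_le_power[of "2::real" "k+2"] by (intro powr_mono) auto
      then show "(2^(k+2)::real) powr (1 / r) \<le> 2^(k+2)"
        by simp
    qed simp
    finally show "c \<le> 2^(k+2) * (I powr (1 / r) / T powr (1 / r))" .
  qed simp
  then show ?thesis
    unfolding I_def by (simp add: algebra_simps)
qed

lemma observability_esssup:
  "ereal (norm (S T x)) \<le> ereal (C1 * exp (C2 / T powr \<kappa> + C3 * T))
      * esssup (lebesgue_on {0..T}) (\<lambda>t. ereal (norm (C (S t x))))"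
proof -
  define e where "e = esssup (lebesgue_on {0..T}) (\<lambda>t. ereal (norm (C (S t x))))"
  have le_e: "ereal c \<le> e" if "\<And>s. s \<in> {3 * T / 2^(k+2) .. T / 2^k} \<Longrightarrow> c \<le> norm (C (S s x))" for k c
    unfolding e_def
  proof (rule le_esssup_of_le_on)
    show "{3 * T / 2^(k+2) .. T / 2^k} \<in> sets (lebesgue_on {0..T})"
      using dyadic_interval_subset by (simp add: sets_restrict_space_iff)
    show "0 < emeasure (lebesgue_on {0..T}) {3 * T / 2^(k+2) .. T / 2^k}"
      using dyadic_interval_subset measure_dyadic_interval[of k] T_pos
      by (simp add: emeasure_restrict_space power_add field_simps)
  qed (use that in auto)
  have "0 \<le> e"
    using le_e[of 0 0] by (simp add: zero_ereal_def)
  have "C1 > 0"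
    unfolding C1_def using M_ge_1 d0_pos by (simp add: less_max_iff_disj)
  show ?thesis
  proof (cases e)
    case (real \<Psi>)
    have "norm (S T x) \<le> C1 * exp (C2 / T powr \<kappa> + C3 * T) * \<Psi>"
    proof (rule norm_S_T_le)
      show "0 \<le> \<Psi>"
        using \<open>0 \<le> e\<close> real by simp
      fix k c assume "\<And>s. s \<in> {3 * T / 2^(k+2) .. T / 2^k} \<Longrightarrow> c \<le> norm (C (S s x))"
      then have "c \<le> \<Psi>"
        using le_e real by auto
      also have "\<dots> \<le> 2^(k+2) * \<Psi>"
        using \<open>0 \<le> \<Psi>\<close> one_le_power[of "2::real" "k+2"] by (simp add: mult_le_cancel_right1)
      finally show "c \<le> 2^(k+2) * \<Psi>" .
    qed
    then show ?thesis
      unfolding e_def[symmetric] real by simp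
  qed (use \<open>0 \<le> e\<close> \<open>C1 > 0\<close> in \<open>simp_all add: e_def[symmetric]\<close>)
qed

end
theorem theoremA1:
  fixes C :: "'a::banach \<Rightarrow>\<^sub>L 'b::banach"
    and S :: "real \<Rightarrow> ('a \<Rightarrow>\<^sub>L 'a)"
    and P :: "real \<Rightarrow> ('a \<Rightarrow>\<^sub>L 'a)"
    and M \<omega> lamS d0 d1 d2 d3 \<gamma>1 \<gamma>2 \<gamma>3 T :: real
  assumes S0: "S 0 = id_blinfun"
    and Sadd: "\<And>t s. t \<ge> 0 \<Longrightarrow> s \<ge> 0 \<Longrightarrow> S (t + s) = S t o\<^sub>L S s"
    and M: "M \<ge> 1"
    and Sbound: "\<And>t. t \<ge> 0 \<Longrightarrow> norm (S t) \<le> M * exp (\<omega> * t)"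
    and meas: "\<And>x. (\<lambda>t. norm (C (S t x))) \<in> borel_measurable (lebesgue_on {0..})"
    and lam: "lamS \<ge> 0"
    and pos: "d0 > 0" "d1 > 0" "d3 > 0" "\<gamma>1 > 0" "\<gamma>2 > 0" "\<gamma>3 > 0" "T > 0"
    and g12: "\<gamma>1 < \<gamma>2"
    and d2: "d2 \<ge> 1"
    and obs: "\<And>x l. l > lamS \<Longrightarrow>
               norm (P l x) \<le> d0 * exp (d1 * l powr \<gamma>1) * norm (C (P l x))"
    and diss: "\<And>x l t. l > lamS \<Longrightarrow> t \<in> {0<..T/2} \<Longrightarrow>
               norm (S t x - P l (S t x)) \<le> d2 * exp (- d3 * l powr \<gamma>2 * t powr \<gamma>3) * norm x"
  shows "let C1 = (4 * M * d0) * max ((4 * d2 * M\<^sup>2 * (d0 * norm C + 1)) powr (8 / (exp 1 * ln 2)))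
                                      (exp (4 * d1 * (2 * lamS) powr \<gamma>1));
             C2 = 4 * (2 powr \<gamma>1 * (2 * 4 powr \<gamma>3) powr (\<gamma>1 * \<gamma>2 / (\<gamma>2 - \<gamma>1))
                        * d1 powr \<gamma>2 / d3 powr \<gamma>1) powr (1 / (\<gamma>2 - \<gamma>1));
             C3 = max \<omega> 0 * (1 + 10 / (exp 1 * ln 2));
             E = exp (C2 / T powr (\<gamma>1 * \<gamma>3 / (\<gamma>2 - \<gamma>1)) + C3 * T)
         in (\<forall>r::real. r \<ge> 1 \<longrightarrow> (\<forall>x.
               norm (S T x) \<le> C1 / T powr (1 / r) * E
                 * (LINT t:{0..T}|lebesgue. norm (C (S t x)) powr r) powr (1 / r)))
          \<and> (\<forall>x. ereal (norm (S T x))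
                 \<le> ereal (C1 * E) * esssup (lebesgue_on {0..T}) (\<lambda>t. ereal (norm (C (S t x)))))"
proof -
  interpret uncertainty_dissipation C S P M \<omega> lamS d0 d1 d2 d3 \<gamma>1 \<gamma>2 \<gamma>3 T
    using Sadd M Sbound meas lam pos g12 d2 obs diss by unfold_locales auto
  show ?thesis
    unfolding Let_def C1_def[symmetric] X_def[symmetric] C2_def[symmetric] C3_def[symmetric]
      \<kappa>_def[symmetric]
    using observability_Lr observability_esssup by blast
qed

end
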